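(* Let $\mathbf{S}$ be any one of the four systems $\mathbf{G3N}$, $\mathbf{G3NeF}$, $\mathbf{G3CoPC}$, $\mathbf{G3MPC}$. The cut rule "from $\Gamma\Rightarrow\alpha$ and $\Delta,\alpha\Rightarrow\varphi$ infer $\Gamma,\Delta\Rightarrow\varphi$" is admissible in $\mathbf{S}$: for all finite multisets $\Gamma,\Delta$ and formulas $\alpha,\varphi$, if $\Gamma\Rightarrow\alpha$ and $\Delta,\alpha\Rightarrow\varphi$ are derivable in $\mathbf{S}$, then $\Gamma,\Delta\Rightarrow\varphi$ is derivable in $\mathbf{S}$.
   Context: Formulas are generated from a countable set of propositional variables $p,q,\dots$ and the constant $\top$ by the grammar $\varphi::= p\mid\top\mid\varphi\wedge\varphi\mid\varphi\vee\varphi\mid\varphi\to\varphi\mid\neg\varphi$ (there is no constant $\bot$). $\varphi\leftrightarrow\psi$ abbreviates $(\varphi\to\psi)\wedge(\psi\to\varphi)$. A sequent is an expression $\Gamma\Rightarrow\varphi$ where $\Gamma$ is a finite multiset of formulas and $\varphi$ is a formula (the goal); $\Gamma,\Delta$ denotes multiset union and $\Gamma,\alpha$ denotes $\Gamma$ with one more occurrence of $\alpha$. Rules ($p$ a propositional variable): (ax) $\Gamma,p\Rightarrow p$ (no premises); ($\top$) $\Gamma\Rightarrow\top$ (no premises); ($\to$r) from $\Gamma,\alpha\Rightarrow\beta$ infer $\Gamma\Rightarrow\alpha\to\beta$; ($\to$l) from $\Gamma,\alpha\to\beta\Rightarrow\alpha$ and $\Gamma,\beta\Rightarrow\varphi$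 infer $\Gamma,\alpha\to\beta\Rightarrow\varphi$; ($\wedge$r) from $\Gamma\Rightarrow\alpha$ and $\Gamma\Rightarrow\beta$ infer $\Gamma\Rightarrow\alpha\wedge\beta$; ($\wedge$l) from $\Gamma,\alpha,\beta\Rightarrow\varphi$ infer $\Gamma,\alpha\wedge\beta\Rightarrow\varphi$; ($\vee$r$_1$), ($\vee$r$_2$) from $\Gamma\Rightarrow\alpha$ (resp. $\Gamma\Rightarrow\beta$) infer $\Gamma\Rightarrow\alpha\vee\beta$; ($\vee$l) from $\Gamma,\alpha\Rightarrow\varphi$ and $\Gamma,\beta\Rightarrow\varphi$ infer $\Gamma,\alpha\vee\beta\Rightarrow\varphi$; (n) from $\Gamma,\neg\alpha,\beta\Rightarrow\alpha$ and $\Gamma,\neg\alpha,\alpha\Rightarrow\beta$ infer $\Gamma,\neg\alpha\Rightarrow\neg\beta$; (nef) from $\Gamma,\neg\alpha\Rightarrow\alpha$ infer $\Gamma,\neg\alpha\Rightarrow\neg\beta$; (copc) from $\Gamma,\neg\alpha,\beta\Rightarrow\alpha$ infer $\Gamma,\neg\alpha\Rightarrow\neg\beta$; (an) from $\Gamma,\alpha\Rightarrow\neg\alpha$ infer $\Gamma\Rightarrow\neg\alpha$. The rules (ax) through ($\vee$l) are the positive rules. The four systems are: $\mathbf{G3N}$ = positive rules + (n); $\mathbf{G3NeF}$ = positive rules + (n) + (nef); $\mathbf{G3CoPC}$ = positive rules + (copc); $\mathbf{G3MPC}$ = positive rules + (copc) + (an). None of them contains weakening, contraction or cut as a rule. A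 derivation is a finite tree of rule instances with leaves instances of (ax) or ($\top$); its height is the number of inference steps on a longest branch. A sequent is derivable if it has a derivation; a formula $\varphi$ is a theorem if $\Rightarrow\varphi$ (empty antecedent) is derivable. *)

theory Defs
  imports Main "HOL-Library.Multiset"
begin

datatype fm = Var nat | Top | Conj fm fm | Disj fm fm | Imp fm fm | Neg fm

datatype sys = G3N | G3NeF | G3CoPC | G3MPC

definition has_n :: "sys \<Rightarrow> bool" where
  "has_n S \<longleftrightarrow> S = G3N \<or> S = G3NeF"
definition has_nef :: "sys \<Rightarrow> bool" where
  "has_nef S \<longleftrightarrow> S = G3NeF"
definition has_copc :: "sys \<Rightarrow> bool" where
  "has_copc S \<longleftrightarrow> S = G3CoPC \<or> S = G3MPC"
definition has_an :: "sys \<Rightarrow> bool" where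
  "has_an S \<longleftrightarrow> S = G3MPC"

inductive derivable :: "sys \<Rightarrow> fm multiset \<Rightarrow> fm \<Rightarrow> bool" where
  ax: "derivable S (add_mset (Var p) \<Gamma>) (Var p)"
| top: "derivable S \<Gamma> Top"
| impR: "derivable S (add_mset a \<Gamma>) b \<Longrightarrow> derivable S \<Gamma> (Imp a b)"
| impL: "derivable S (add_mset (Imp a b) \<Gamma>) a \<Longrightarrow> derivable S (add_mset b \<Gamma>) \<phi>
         \<Longrightarrow> derivable S (add_mset (Imp a b) \<Gamma>) \<phi>"
| conjR: "derivable S \<Gamma> a \<Longrightarrow> derivable S \<Gamma> b \<Longrightarrow> derivable S \<Gamma> (Conj a b)"
| conjL: "derivable S (add_mset a (add_mset b \<Gamma>)) \<phi> \<Longrightarrow> derivable S (add_mset (Conj a b) \<Gamma>) \<phi>"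
| disjR1: "derivable S \<Gamma> a \<Longrightarrow> derivable S \<Gamma> (Disj a b)"
| disjR2: "derivable S \<Gamma> b \<Longrightarrow> derivable S \<Gamma> (Disj a b)"
| disjL: "derivable S (add_mset a \<Gamma>) \<phi> \<Longrightarrow> derivable S (add_mset b \<Gamma>) \<phi>
          \<Longrightarrow> derivable S (add_mset (Disj a b) \<Gamma>) \<phi>"
| n: "has_n S \<Longrightarrow> derivable S (add_mset (Neg a) (add_mset b \<Gamma>)) a
      \<Longrightarrow> derivable S (add_mset (Neg a) (add_mset a \<Gamma>)) b
      \<Longrightarrow> derivable S (add_mset (Neg a) \<Gamma>) (Neg b)"
| nef: "has_nef S \<Longrightarrow> derivable S (add_mset (Neg a) \<Gamma>) a
      \<Longrightarrow> derivable S (add_mset (Neg a) \<Gamma>) (Neg b)"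
| copc: "has_copc S \<Longrightarrow> derivable S (add_mset (Neg a) (add_mset b \<Gamma>)) a
      \<Longrightarrow> derivable S (add_mset (Neg a) \<Gamma>) (Neg b)"
| an: "has_an S \<Longrightarrow> derivable S (add_mset a \<Gamma>) (Neg a)
      \<Longrightarrow> derivable S \<Gamma> (Neg a)"

end

theory Submission
  imports Defs
begin

text \<open>Cut is eliminated by induction on the cut formula and, inside, on the derivation
  of the left premise. If the left premise ends in a left rule, the cut is moved above that
  rule. If the left premise introduces the cut formula, the formula is traced up the right
  premise to the inferences where it is principal, and there the cut is replaced by cuts on
  immediate subformulas followed by contraction; for this, weakening, contraction and the
  invertibility of (\<open>\<and>\<close>l), (\<open>\<or>\<close>l) and of the right premise of (\<open>\<rightarrow>\<close>l) are proved first.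
  When the left premise of a cut on \<open>\<not>a\<close> ends in (an), the inner induction hypothesis is used
  as well; the combinations of negation rules that never occur in one system are excluded by
  the system flags.\<close>

lemma add_mset_diff_single [simp]: "A \<in># M \<Longrightarrow> add_mset X M - {#A#} = add_mset X (M - {#A#})"
  by (metis add_mset_commute add_mset_remove_trivial multi_member_split)

lemma less_count_mem: "k < count M a \<Longrightarrow> a \<in># M"
  by (simp flip: count_greater_zero_iff)

lemma derivable_weaken: "derivable S \<Gamma> \<phi> \<Longrightarrow> derivable S (\<Gamma> + \<Theta>) \<phi>"
  by (induction rule: derivable.induct) (auto intro: derivable.intros)

lemma ax_mem: "Var p \<in># \<Gamma> \<Longrightarrow> derivable S \<Gamma> (Var p)"
  by (metis derivable.ax insert_DiffM)

lemma impL_mem: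
  "Imp a b \<in># \<Gamma> \<Longrightarrow> derivable S \<Gamma> a \<Longrightarrow> derivable S (add_mset b (\<Gamma> - {#Imp a b#})) \<phi>
   \<Longrightarrow> derivable S \<Gamma> \<phi>"
  using derivable.impL[of S a b "\<Gamma> - {#Imp a b#}" \<phi>] by simp

lemma conjL_mem:
  "Conj a b \<in># \<Gamma> \<Longrightarrow> derivable S (add_mset a (add_mset b (\<Gamma> - {#Conj a b#}))) \<phi>
   \<Longrightarrow> derivable S \<Gamma> \<phi>"
  using derivable.conjL[of S a b "\<Gamma> - {#Conj a b#}" \<phi>] by simp

lemma disjL_mem:
  "Disj a b \<in># \<Gamma> \<Longrightarrow> derivable S (add_mset a (\<Gamma> - {#Disj a b#})) \<phi>
   \<Longrightarrow> derivable S (add_mset b (\<Gamma> - {#Disj a b#})) \<phi> \<Longrightarrow> derivable S \<Gamma> \<phi>"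
  using derivable.disjL[of S a "\<Gamma> - {#Disj a b#}" \<phi> b] by simp

lemma n_mem:
  "has_n S \<Longrightarrow> Neg a \<in># \<Gamma> \<Longrightarrow> derivable S (add_mset b \<Gamma>) a \<Longrightarrow> derivable S (add_mset a \<Gamma>) b
   \<Longrightarrow> derivable S \<Gamma> (Neg b)"
  using derivable.n[of S a b "\<Gamma> - {#Neg a#}"] by (simp add: add_mset_commute)

lemma nef_mem: "has_nef S \<Longrightarrow> Neg a \<in># \<Gamma> \<Longrightarrow> derivable S \<Gamma> a \<Longrightarrow> derivable S \<Gamma> (Neg b)"
  using derivable.nef[of S a "\<Gamma> - {#Neg a#}" b] by simp

lemma copc_mem:
  "has_copc S \<Longrightarrow> Neg a \<in># \<Gamma> \<Longrightarrow> derivable S (add_mset b \<Gamma>) a \<Longrightarrow> derivable S \<Gamma> (Neg b)"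
  using derivable.copc[of S a b "\<Gamma> - {#Neg a#}"] by (simp add: add_mset_commute)

text \<open>One occurrence of \<open>A\<close> in the antecedent may be replaced by \<open>M\<close> as soon as this is
  possible at the inferences where that occurrence is principal; there the replacement has
  already been made in those premises which still contain \<open>A\<close>. The bound \<open>k\<close> records further
  copies of \<open>A\<close> that stay in the context, so that contraction is the instance \<open>k = 1\<close>,
  \<open>M = {#}\<close>.\<close>

lemma derivable_replace_occurrence:
  assumes "derivable S \<Theta> \<phi>" and "k < count \<Theta> A"
    and principal_ax: "\<And>p \<Gamma>. A = Var p \<Longrightarrow> k \<le> count \<Gamma> A \<Longrightarrow> derivable S (M + \<Gamma>) (Var p)"
    and principal_impL: "\<And>a b \<Gamma> \<psi>. A = Imp a b \<Longrightarrow> k \<le> count \<Gamma> A \<Longrightarrow> derivable S (M + \<Gamma>) a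
      \<Longrightarrow> derivable S (add_mset b \<Gamma>) \<psi> \<Longrightarrow> derivable S (M + \<Gamma>) \<psi>"
    and principal_conjL: "\<And>a b \<Gamma> \<psi>. A = Conj a b \<Longrightarrow> k \<le> count \<Gamma> A
      \<Longrightarrow> derivable S (add_mset a (add_mset b \<Gamma>)) \<psi> \<Longrightarrow> derivable S (M + \<Gamma>) \<psi>"
    and principal_disjL: "\<And>a b \<Gamma> \<psi>. A = Disj a b \<Longrightarrow> k \<le> count \<Gamma> A \<Longrightarrow> derivable S (add_mset a \<Gamma>) \<psi>
      \<Longrightarrow> derivable S (add_mset b \<Gamma>) \<psi> \<Longrightarrow> derivable S (M + \<Gamma>) \<psi>"
    and principal_n: "\<And>a b \<Gamma>. A = Neg a \<Longrightarrow> k \<le> count \<Gamma> A \<Longrightarrow> has_n S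
      \<Longrightarrow> derivable S (M + add_mset b \<Gamma>) a \<Longrightarrow> derivable S (M + add_mset a \<Gamma>) b
      \<Longrightarrow> derivable S (M + \<Gamma>) (Neg b)"
    and principal_nef: "\<And>a b \<Gamma>. A = Neg a \<Longrightarrow> k \<le> count \<Gamma> A \<Longrightarrow> has_nef S
      \<Longrightarrow> derivable S (M + \<Gamma>) a \<Longrightarrow> derivable S (M + \<Gamma>) (Neg b)"
    and principal_copc: "\<And>a b \<Gamma>. A = Neg a \<Longrightarrow> k \<le> count \<Gamma> A \<Longrightarrow> has_copc S
      \<Longrightarrow> derivable S (add_mset (Neg a) (add_mset b \<Gamma>)) a \<Longrightarrow> derivable S (M + add_mset b \<Gamma>) a
      \<Longrightarrow> derivable S (M + \<Gamma>) (Neg b)"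
  shows "derivable S (M + (\<Theta> - {#A#})) \<phi>"
  using assms(1,2)
proof (induction S' \<equiv> S \<Theta> \<phi> rule: derivable.induct)
  case (ax p \<Gamma>)
  then show ?case by (cases "A = Var p") (auto intro: principal_ax ax_mem simp: in_diff_count)
next
  case (impL x y \<Gamma> \<psi>)
  then show ?case using less_count_mem[OF impL.prems]
    by (cases "A = Imp x y") (auto intro: principal_impL impL_mem simp: add_mset_commute)
next
  case (conjL x y \<Gamma> \<psi>)
  then show ?case using less_count_mem[OF conjL.prems]
    by (cases "A = Conj x y") (auto intro: principal_conjL conjL_mem simp: add_mset_commute)
next
  case (disjL x \<Gamma> \<psi> y)
  then show ?case using less_count_mem[OF disjL.prems]
    by (cases "A = Disj x y") (auto intro: principal_disjL disjL_mem simp: add_mset_commute)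
next
  case (n x y \<Gamma>)
  then show ?case using less_count_mem[OF n.prems]
    by (cases "A = Neg x") (auto intro: principal_n n_mem simp: add_mset_commute)
next
  case (nef x \<Gamma> y)
  then show ?case using less_count_mem[OF nef.prems]
    by (cases "A = Neg x") (auto intro: principal_nef nef_mem)
next
  case (copc x y \<Gamma>)
  then show ?case using less_count_mem[OF copc.prems]
    by (cases "A = Neg x") (auto intro: principal_copc copc_mem simp: add_mset_commute)
next
  case (impR x \<Gamma> y)
  then show ?case using less_count_mem[OF impR.prems]
    by (auto intro: derivable.impR simp: add_mset_commute)
next
  case (an x \<Gamma>)
  then show ?case using less_count_mem[OF an.prems]
    by (auto intro: derivable.an simp: add_mset_commute)
qed (auto intro: derivable.intros)

lemma derivable_drop_Top: "derivable S (add_mset Top \<Gamma>) \<phi> \<Longrightarrow> derivable S \<Gamma> \<phi>"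
  using derivable_replace_occurrence[where \<Theta>="add_mset Top \<Gamma>" and A=Top and k=0 and M="{#}"]
  by simp

lemma conjL_inversion:
  "derivable S (add_mset (Conj a b) \<Gamma>) \<phi> \<Longrightarrow> derivable S (add_mset a (add_mset b \<Gamma>)) \<phi>"
  using derivable_replace_occurrence[where \<Theta>="add_mset (Conj a b) \<Gamma>" and A="Conj a b"
      and k=0 and M="{#a, b#}"]
  by simp

lemma disjL_inversion:
  assumes "derivable S (add_mset (Disj a b) \<Gamma>) \<phi>"
  shows "derivable S (add_mset a \<Gamma>) \<phi>" and "derivable S (add_mset b \<Gamma>) \<phi>"
  using derivable_replace_occurrence[OF assms, where A="Disj a b" and k=0 and M="{#a#}"]
    derivable_replace_occurrence[OF assms, where A="Disj a b" and k=0 and M="{#b#}"] by simp_all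

lemma impL_inversion: "derivable S (add_mset (Imp a b) \<Gamma>) \<phi> \<Longrightarrow> derivable S (add_mset b \<Gamma>) \<phi>"
  using derivable_replace_occurrence[where \<Theta>="add_mset (Imp a b) \<Gamma>" and A="Imp a b"
      and k=0 and M="{#b#}"]
  by simp

lemma contraction: "derivable S (add_mset A (add_mset A \<Gamma>)) \<phi> \<Longrightarrow> derivable S (add_mset A \<Gamma>) \<phi>"
proof (induction A arbitrary: \<Gamma> \<phi> rule: measure_induct_rule[of size])
  case (less A)
  note contract_smaller = less.IH
  have "derivable S ({#} + (add_mset A (add_mset A \<Gamma>) - {#A#})) \<phi>"
  proof (rule derivable_replace_occurrence[where k=1])
    txt \<open>In each principal case the copy of \<open>A\<close> left in \<open>\<Gamma>'\<close> is inverted, and the duplicated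
      immediate subformulas are contracted by induction.\<close>
    fix \<Gamma>' assume "1 \<le> count \<Gamma>' A"
    then obtain \<Gamma>'' where \<Gamma>': "\<Gamma>' = add_mset A \<Gamma>''"
      by (metis less_count_mem[of 0] One_nat_def Suc_le_eq multi_member_split)
    { fix p assume "A = Var p"
      then show "derivable S ({#} + \<Gamma>') (Var p)" by (simp add: \<Gamma>' derivable.ax) }
    { fix a b \<psi> assume A: "A = Imp a b"
        and "derivable S ({#} + \<Gamma>') a" and "derivable S (add_mset b \<Gamma>') \<psi>"
      moreover from this have "derivable S (add_mset b \<Gamma>'') \<psi>"
        using contract_smaller[of b] impL_inversion[of S a b "add_mset b \<Gamma>''"]
        by (simp add: \<Gamma>' add_mset_commute)
      ultimately show "derivable S ({#} + \<Gamma>') \<psi>" by (simp add: \<Gamma>' derivable.impL) }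
    { fix a b \<psi> assume A: "A = Conj a b" and "derivable S (add_mset a (add_mset b \<Gamma>')) \<psi>"
      then have "derivable S (add_mset a (add_mset a (add_mset b (add_mset b \<Gamma>'')))) \<psi>"
        using conjL_inversion[of S a b "add_mset a (add_mset b \<Gamma>'')"]
        by (simp add: \<Gamma>' add_mset_commute)
      then have "derivable S (add_mset b (add_mset b (add_mset a \<Gamma>''))) \<psi>"
        using contract_smaller[of a] A by (simp add: add_mset_commute)
      then have "derivable S (add_mset b (add_mset a \<Gamma>'')) \<psi>"
        using contract_smaller[of b "add_mset a \<Gamma>''"] A by simp
      then show "derivable S ({#} + \<Gamma>') \<psi>" by (simp add: \<Gamma>' A derivable.conjL add_mset_commute) }
    { fix a b \<psi> assume A: "A = Disj a b"
        and "derivable S (add_mset a \<Gamma>') \<psi>" and "derivable S (add_mset b \<Gamma>') \<psi>"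
      then have "derivable S (add_mset a \<Gamma>'') \<psi>" and "derivable S (add_mset b \<Gamma>'') \<psi>"
        using disjL_inversion[of S a b "add_mset a \<Gamma>''"] disjL_inversion[of S a b "add_mset b \<Gamma>''"]
          contract_smaller[of a] contract_smaller[of b]
        by (simp_all add: \<Gamma>' add_mset_commute)
      then show "derivable S ({#} + \<Gamma>') \<psi>" by (simp add: \<Gamma>' A derivable.disjL) }
    { fix a b assume "A = Neg a"
      then show "has_n S \<Longrightarrow> derivable S ({#} + add_mset b \<Gamma>') a
          \<Longrightarrow> derivable S ({#} + add_mset a \<Gamma>') b \<Longrightarrow> derivable S ({#} + \<Gamma>') (Neg b)"
        and "has_nef S \<Longrightarrow> derivable S ({#} + \<Gamma>') a \<Longrightarrow> derivable S ({#} + \<Gamma>') (Neg b)"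
        and "has_copc S \<Longrightarrow> derivable S ({#} + add_mset b \<Gamma>') a \<Longrightarrow> derivable S ({#} + \<Gamma>') (Neg b)"
        by (auto simp: \<Gamma>' intro: n_mem nef_mem copc_mem) }
  qed (use less.prems in simp_all)
  then show ?case by simp
qed

lemma contraction_mset: "derivable S (M + M + \<Gamma>) \<phi> \<Longrightarrow> derivable S (M + \<Gamma>) \<phi>"
proof (induction M arbitrary: \<Gamma>)
  case (add x M)
  then have "derivable S (M + M + add_mset x \<Gamma>) \<phi>"
    using contraction[of S x "M + M + \<Gamma>"] by (simp add: add_mset_commute)
  then show ?case using add.IH[of "add_mset x \<Gamma>"] by simp
qed simp

definition cut_admissible :: "sys \<Rightarrow> fm \<Rightarrow> bool" where
  "cut_admissible S \<alpha> \<longleftrightarrow>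
     (\<forall>\<Gamma> \<Delta> \<phi>. derivable S \<Gamma> \<alpha> \<longrightarrow> derivable S (add_mset \<alpha> \<Delta>) \<phi> \<longrightarrow> derivable S (\<Gamma> + \<Delta>) \<phi>)"

lemma cut_admissibleD:
  "cut_admissible S \<alpha> \<Longrightarrow> derivable S \<Gamma> \<alpha> \<Longrightarrow> derivable S (add_mset \<alpha> \<Delta>) \<phi> \<Longrightarrow> derivable S (\<Gamma> + \<Delta>) \<phi>"
  unfolding cut_admissible_def by blast

lemma cut_Imp:
  assumes "cut_admissible S a" and "cut_admissible S b"
    and "derivable S (add_mset a \<Gamma>) b" and "derivable S (add_mset (Imp a b) \<Delta>) \<phi>"
  shows "derivable S (\<Gamma> + \<Delta>) \<phi>"
proof -
  have principal: "derivable S (\<Gamma> + \<Gamma>') \<psi>"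
    if "derivable S (\<Gamma> + \<Gamma>') a" and "derivable S (add_mset b \<Gamma>') \<psi>" for \<Gamma>' \<psi>
  proof -
    have "derivable S (\<Gamma> + \<Gamma>' + \<Gamma>) b"
      using cut_admissibleD[OF assms(1) that(1) assms(3)] .
    from cut_admissibleD[OF assms(2) this that(2)]
    have "derivable S ((\<Gamma> + \<Gamma>') + (\<Gamma> + \<Gamma>') + {#}) \<psi>" by (simp add: ac_simps)
    then show ?thesis using contraction_mset[of S "\<Gamma> + \<Gamma>'" "{#}" \<psi>] by simp
  qed
  have "derivable S (\<Gamma> + (add_mset (Imp a b) \<Delta> - {#Imp a b#})) \<phi>"
    by (rule derivable_replace_occurrence[OF assms(4), where k=0]) (auto intro: principal)
  then show ?thesis by simp
qed

lemma cut_Conj: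
  assumes "cut_admissible S a" and "cut_admissible S b"
    and "derivable S \<Gamma> a" and "derivable S \<Gamma> b" and "derivable S (add_mset (Conj a b) \<Delta>) \<phi>"
  shows "derivable S (\<Gamma> + \<Delta>) \<phi>"
proof -
  have principal: "derivable S (\<Gamma> + \<Gamma>') \<psi>"
    if "derivable S (add_mset a (add_mset b \<Gamma>')) \<psi>" for \<Gamma>' \<psi>
  proof -
    have "derivable S (\<Gamma> + add_mset b \<Gamma>') \<psi>"
      using cut_admissibleD[OF assms(1,3) that] .
    then have "derivable S (\<Gamma> + (\<Gamma> + \<Gamma>')) \<psi>"
      using cut_admissibleD[OF assms(2,4)] by (simp add: add_mset_commute)
    then show ?thesis using contraction_mset[of S \<Gamma> \<Gamma>' \<psi>] by (simp add: ac_simps)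
  qed
  have "derivable S (\<Gamma> + (add_mset (Conj a b) \<Delta> - {#Conj a b#})) \<phi>"
    by (rule derivable_replace_occurrence[OF assms(5), where k=0]) (auto intro: principal)
  then show ?thesis by simp
qed

lemma cut_Disj:
  assumes "cut_admissible S a" and "cut_admissible S b"
    and "derivable S \<Gamma> a \<or> derivable S \<Gamma> b" and "derivable S (add_mset (Disj a b) \<Delta>) \<phi>"
  shows "derivable S (\<Gamma> + \<Delta>) \<phi>"
proof -
  have principal: "derivable S (\<Gamma> + \<Gamma>') \<psi>"
    if "derivable S (add_mset a \<Gamma>') \<psi>" and "derivable S (add_mset b \<Gamma>') \<psi>" for \<Gamma>' \<psi>
    using assms(3) cut_admissibleD[OF assms(1) _ that(1)] cut_admissibleD[OF assms(2) _ that(2)]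
    by blast
  have "derivable S (\<Gamma> + (add_mset (Disj a b) \<Delta> - {#Disj a b#})) \<phi>"
    by (rule derivable_replace_occurrence[OF assms(4), where k=0]) (auto intro: principal)
  then show ?thesis by simp
qed

lemma cut_admissible_shared_context:
  assumes "cut_admissible S a" and "derivable S (\<Gamma> + \<Delta>) a" and "derivable S (add_mset a \<Gamma>) \<phi>"
  shows "derivable S (\<Gamma> + \<Delta>) \<phi>"
proof -
  have "derivable S (\<Gamma> + \<Gamma> + \<Delta>) \<phi>"
    using cut_admissibleD[OF assms] by (simp add: ac_simps)
  then show ?thesis by (rule contraction_mset)
qed

lemma cut_Neg_by_n:
  assumes "has_n S" and "Neg c \<in># \<Gamma>" and cut_a: "cut_admissible S a"
    and "derivable S (add_mset a \<Gamma>) c" and "derivable S (add_mset c \<Gamma>) a"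
    and "derivable S (add_mset (Neg a) \<Delta>) \<phi>"
  shows "derivable S (\<Gamma> + \<Delta>) \<phi>"
proof -
  have principal_n: "derivable S (\<Gamma> + \<Delta>') (Neg d)"
    if "derivable S (\<Gamma> + add_mset d \<Delta>') a" and "derivable S (\<Gamma> + add_mset a \<Delta>') d" for d \<Delta>'
  proof (rule n_mem[OF assms(1)])
    show "Neg c \<in># \<Gamma> + \<Delta>'" using assms(2) by simp
    show "derivable S (add_mset d (\<Gamma> + \<Delta>')) c"
      using cut_admissible_shared_context[OF cut_a that(1) assms(4)] by simp
    have "derivable S ((\<Gamma> + \<Delta>') + {#c#}) a"
      using derivable_weaken[OF assms(5), of \<Delta>'] by (simp add: ac_simps)
    moreover have "derivable S (add_mset a (\<Gamma> + \<Delta>')) d" using that(2) by simp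
    ultimately show "derivable S (add_mset c (\<Gamma> + \<Delta>')) d"
      using cut_admissible_shared_context[OF cut_a, of "\<Gamma> + \<Delta>'" "{#c#}"] by simp
  qed
  have principal_nef: "derivable S (\<Gamma> + \<Delta>') (Neg d)"
    if "has_nef S" and "derivable S (\<Gamma> + \<Delta>') a" for d \<Delta>'
    using nef_mem[OF that(1), of c] assms(2) cut_admissible_shared_context[OF cut_a that(2) assms(4)]
    by simp
  have "derivable S (\<Gamma> + (add_mset (Neg a) \<Delta> - {#Neg a#})) \<phi>"
    by (rule derivable_replace_occurrence[OF assms(6), where k=0])
      (use assms(1) principal_n principal_nef in \<open>auto simp: has_n_def has_copc_def\<close>)
  then show ?thesis by simp
qed

lemma cut_Neg_by_nef:
  assumes "has_nef S" and "Neg c \<in># \<Gamma>" and "derivable S \<Gamma> c"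
    and "derivable S (add_mset (Neg a) \<Delta>) \<phi>"
  shows "derivable S (\<Gamma> + \<Delta>) \<phi>"
proof -
  have principal: "derivable S (\<Gamma> + \<Delta>') (Neg d)" for d \<Delta>'
    using nef_mem[OF assms(1), of c] assms(2) derivable_weaken[OF assms(3)] by simp
  have "derivable S (\<Gamma> + (add_mset (Neg a) \<Delta> - {#Neg a#})) \<phi>"
    by (rule derivable_replace_occurrence[OF assms(4), where k=0]) (auto intro: principal)
  then show ?thesis by simp
qed

lemma cut_Neg_by_copc:
  assumes "has_copc S" and "Neg c \<in># \<Gamma>" and cut_a: "cut_admissible S a"
    and "derivable S (add_mset a \<Gamma>) c" and "derivable S (add_mset (Neg a) \<Delta>) \<phi>"
  shows "derivable S (\<Gamma> + \<Delta>) \<phi>"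
proof -
  have principal: "derivable S (\<Gamma> + \<Delta>') (Neg d)" if "derivable S (\<Gamma> + add_mset d \<Delta>') a" for d \<Delta>'
    using copc_mem[OF assms(1), of c] assms(2)
      cut_admissible_shared_context[OF cut_a that assms(4)] by simp
  have "derivable S (\<Gamma> + (add_mset (Neg a) \<Delta> - {#Neg a#})) \<phi>"
    by (rule derivable_replace_occurrence[OF assms(5), where k=0])
      (use assms(1) principal in \<open>auto simp: has_n_def has_nef_def has_copc_def\<close>)
  then show ?thesis by simp
qed

lemma cut_Neg_by_an:
  assumes "has_an S" and cut_a: "cut_admissible S a"
    and cut_left_premise: "\<And>\<Delta>' \<psi>. derivable S (add_mset (Neg a) \<Delta>') \<psi> \<Longrightarrow> derivable S (add_mset a \<Gamma> + \<Delta>') \<psi>"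
    and "derivable S (add_mset (Neg a) \<Delta>) \<phi>"
  shows "derivable S (\<Gamma> + \<Delta>) \<phi>"
proof -
  have principal: "derivable S (\<Gamma> + \<Delta>') (Neg d)"
    if "has_copc S" and "derivable S (add_mset (Neg a) (add_mset d \<Delta>')) a"
      and "derivable S (\<Gamma> + add_mset d \<Delta>') a" for d \<Delta>'
  proof -
    txt \<open>Weakening and (copc) turn the right premise into one with goal \<open>Neg d\<close>, which
      can be cut against the premise of (an).\<close>
    have "derivable S (add_mset (Neg a) (add_mset d \<Delta>')) (Neg d)"
      using copc_mem[OF that(1), of a] derivable_weaken[OF that(2), of "{#d#}"] by simp
    from cut_left_premise[OF this]
    have "derivable S (add_mset a (\<Gamma> + add_mset d \<Delta>')) (Neg d)" by (simp add: add_mset_commute)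
    then have "derivable S (add_mset d (\<Gamma> + \<Delta>')) (Neg d)"
      using cut_admissible_shared_context[OF cut_a, of "\<Gamma> + add_mset d \<Delta>'" "{#}"] that(3)
      by simp
    then show ?thesis using derivable.an[OF assms(1)] by simp
  qed
  have "derivable S (\<Gamma> + (add_mset (Neg a) \<Delta> - {#Neg a#})) \<phi>"
    by (rule derivable_replace_occurrence[OF assms(4), where k=0])
      (use assms(1) principal in \<open>auto simp: has_n_def has_nef_def has_an_def\<close>)
  then show ?thesis by simp
qed

lemma cut_from_smaller_cuts:
  "derivable S \<Gamma> \<alpha> \<Longrightarrow> (\<And>\<beta>. size \<beta> < size \<alpha> \<Longrightarrow> cut_admissible S \<beta>)
   \<Longrightarrow> derivable S (add_mset \<alpha> \<Delta>) \<phi> \<Longrightarrow> derivable S (\<Gamma> + \<Delta>) \<phi>"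
proof (induction arbitrary: \<Delta> \<phi> rule: derivable.induct)
  case (ax S p \<Gamma>)
  then show ?case using derivable_weaken[of S "add_mset (Var p) \<Delta>" \<phi> \<Gamma>] by (simp add: ac_simps)
next
  case (top S \<Gamma>)
  then show ?case using derivable_drop_Top derivable_weaken[of S \<Delta> \<phi> \<Gamma>] by (simp add: ac_simps)
next
  case (impR S a \<Gamma> b)
  show ?case by (rule cut_Imp[OF impR.prems(1,1) impR.hyps impR.prems(2)]) simp_all
next
  case (conjR S \<Gamma> a b)
  show ?case by (rule cut_Conj[OF conjR.prems(1,1) conjR.hyps(1,2) conjR.prems(2)]) simp_all
next
  case (disjR1 S \<Gamma> a b)
  show ?case by (rule cut_Disj[OF disjR1.prems(1,1) _ disjR1.prems(2)]) (simp_all add: disjR1.hyps(1))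
next
  case (disjR2 S \<Gamma> b a)
  show ?case by (rule cut_Disj[OF disjR2.prems(1,1) _ disjR2.prems(2)]) (simp_all add: disjR2.hyps(1))
next
  case (impL S a b \<Gamma> \<psi>)
  have "derivable S (add_mset (Imp a b) (\<Gamma> + \<Delta>)) a"
    using derivable_weaken[OF impL.hyps(1), of \<Delta>] by simp
  moreover have "derivable S (add_mset b (\<Gamma> + \<Delta>)) \<phi>"
    using impL.IH(2)[OF impL.prems] by simp
  ultimately show ?case using derivable.impL by simp
next
  case (conjL S a b \<Gamma> \<psi>)
  have "derivable S (add_mset a (add_mset b (\<Gamma> + \<Delta>))) \<phi>"
    using conjL.IH[OF conjL.prems] by simp
  then show ?case using derivable.conjL by simp
next
  case (disjL S a \<Gamma> \<psi> b)
  have "derivable S (add_mset a (\<Gamma> + \<Delta>)) \<phi>" and "derivable S (add_mset b (\<Gamma> + \<Delta>)) \<phi>"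
    using disjL.IH(1,2)[OF disjL.prems] by simp_all
  then show ?case using derivable.disjL by simp
next
  case (n S c a \<Gamma>)
  show ?case
    by (rule cut_Neg_by_n[OF n.hyps(1) _ _ _ _ n.prems(2)])
      (use n.hyps(2,3) n.prems(1) in \<open>simp_all add: add_mset_commute\<close>)
next
  case (nef S c \<Gamma> a)
  show ?case by (rule cut_Neg_by_nef[OF nef.hyps(1) _ nef.hyps(2) nef.prems(2)]) simp
next
  case (copc S c a \<Gamma>)
  show ?case
    by (rule cut_Neg_by_copc[OF copc.hyps(1) _ _ _ copc.prems(2)])
      (use copc.hyps(2) copc.prems(1) in \<open>simp_all add: add_mset_commute\<close>)
next
  case (an S a \<Gamma>)
  show ?case
    by (rule cut_Neg_by_an[OF an.hyps(1) _ an.IH an.prems(2)]) (use an.prems(1) in simp_all)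
qed

lemma cut_admissible: "cut_admissible S \<alpha>"
  by (induction \<alpha> rule: measure_induct_rule[of size])
    (auto simp: cut_admissible_def intro: cut_from_smaller_cuts)

theorem theorem4p1:
  fixes S :: sys and \<Gamma> \<Delta> :: "fm multiset" and \<alpha> \<phi> :: fm
  assumes "derivable S \<Gamma> \<alpha>"
    and "derivable S (add_mset \<alpha> \<Delta>) \<phi>"
  shows "derivable S (\<Gamma> + \<Delta>) \<phi>"
  using cut_admissibleD[OF cut_admissible assms] .

end
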